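(* Let $G$ be a torsion abelian group. If there exists a surjective endomorphism $\varphi\colon G\to G$ that is positively expansive, then $G$ is finite.
   Context: $\mathbb N=\{0,1,2,\dots\}$. An endomorphism $\varphi\colon G\to G$ of an abelian group is positively expansive if there is a finite subgroup $S\leq G$ such that for every finite subgroup $F\leq G$ there is $n\in\mathbb N$ with $F\subseteq\sum_{k=0}^n\varphi^kS$. *)

theory Defs
  imports "HOL-Algebra.Algebra"
begin

text \<open>Abelian groups are written multiplicatively (HOL-Algebra convention).
  orbit_sum G phi S n is the subgroup sum S + phi S + ... + phi^n S,
  realised as the iterated complex product of the sets phi^k S.\<close>

fun orbit_sum :: "('a, 'b) monoid_scheme \<Rightarrow> ('a \<Rightarrow> 'a) \<Rightarrow> 'a set \<Rightarrow> nat \<Rightarrow> 'a set" where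
  "orbit_sum G phi S 0 = S"
| "orbit_sum G phi S (Suc n) = orbit_sum G phi S n <#>\<^bsub>G\<^esub> ((phi ^^ Suc n) ` S)"

definition positively_expansive :: "('a, 'b) monoid_scheme \<Rightarrow> ('a \<Rightarrow> 'a) \<Rightarrow> bool" where
  "positively_expansive G phi \<longleftrightarrow>
     (\<exists>S. subgroup S G \<and> finite S \<and>
        (\<forall>F. subgroup F G \<and> finite F \<longrightarrow> (\<exists>n. F \<subseteq> orbit_sum G phi S n)))"

definition torsion_group :: "('a, 'b) monoid_scheme \<Rightarrow> bool" where
  "torsion_group G \<longleftrightarrow> (\<forall>x \<in> carrier G. \<exists>n::nat. n > 0 \<and> x [^]\<^bsub>G\<^esub> n = \<one>\<^bsub>G\<^esub>)"

end

theory Submission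
  imports Defs
begin

text \<open>Write T n for orbit_sum G phi S n, so that T (n+1) = S + phi(T n) and T n \<subseteq> T (n+1).
  Since phi is onto, the finite subgroup S is the image of a finite set, which lies in a finite
  subgroup (G is torsion abelian) and hence in some T n by expansivity. Then S \<subseteq> phi(T n), so
  T (n+1) = phi(T n) has at most as many elements as T n \<subseteq> T (n+1): the chain is stationary
  from n on. Every element of G generates a finite subgroup, which lies in some T k \<subseteq> T n;
  hence G = T n is finite.\<close>

lemma finite_set_mult: "finite A \<Longrightarrow> finite B \<Longrightarrow> finite (A <#>\<^bsub>G\<^esub> B)"
  unfolding set_mult_def by auto

lemma finite_orbit_sum: "finite S \<Longrightarrow> finite (orbit_sum G phi S n)"
  by (induction n) (simp_all add: finite_set_mult)

lemma (in monoid) subset_set_mult_right: "H \<subseteq> carrier G \<Longrightarrow> \<one> \<in> K \<Longrightarrow> H \<subseteq> H <#> K"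
  unfolding set_mult_def by force

lemma (in monoid) subset_set_mult_left: "H \<subseteq> carrier G \<Longrightarrow> \<one> \<in> K \<Longrightarrow> H \<subseteq> K <#> H"
  unfolding set_mult_def by force

lemma (in group) set_mult_subgroup_absorb:
  assumes "subgroup H G" "S \<subseteq> H" "\<one> \<in> S"
  shows "S <#> H = H"
proof
  show "S <#> H \<subseteq> H"
    using assms unfolding set_mult_def by (auto intro: subgroup.m_closed)
  show "H \<subseteq> S <#> H"
    using subset_set_mult_left[OF subgroup.subset[OF assms(1)] assms(3)] .
qed

lemma (in group) torsion_finite_generate_singleton:
  assumes "torsion_group G" "x \<in> carrier G"
  shows "finite (generate G {x})"
proof -
  obtain n :: nat where "n > 0" "x [^] n = \<one>"
    using assms unfolding torsion_group_def by blast
  then have "ord x \<noteq> 0" using ord_eq_0[OF assms(2)] by auto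
  then show ?thesis using generate_pow_card[OF assms(2)] card_ge_0_finite by simp
qed

lemma (in comm_group) torsion_finite_subgroup_containing:
  assumes "torsion_group G" "finite A" "A \<subseteq> carrier G"
  obtains F where "subgroup F G" "finite F" "A \<subseteq> F"
proof -
  have "\<exists>F. subgroup F G \<and> finite F \<and> A \<subseteq> F"
    using assms(2,3)
  proof (induction A rule: finite_induct)
    case empty
    then show ?case using triv_subgroup by blast
  next
    case (insert a B)
    then obtain F where F: "subgroup F G" "finite F" "B \<subseteq> F" by auto
    have a: "a \<in> carrier G" using insert.prems by simp
    define C where "C = generate G {a}"
    have C: "subgroup C G" "finite C" "a \<in> C"
      using generate_is_subgroup[of "{a}"] torsion_finite_generate_singleton[OF assms(1) a]
        generate.incl[of a "{a}"] a unfolding C_def by auto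
    have "F \<subseteq> F <#> C" "C \<subseteq> F <#> C"
      using subset_set_mult_right[OF subgroup.subset[OF F(1)] subgroup.one_closed[OF C(1)]]
        subset_set_mult_left[OF subgroup.subset[OF C(1)] subgroup.one_closed[OF F(1)]] .
    then show ?case
      using mult_subgroups[OF F(1) C(1)] finite_set_mult[OF F(2) C(2)] F(3) C(3) by blast
  qed
  then show thesis using that by blast
qed

locale comm_group_endomorphism = comm_group G for G (structure) +
  fixes phi :: "'a \<Rightarrow> 'a"
  assumes hom_phi: "phi \<in> hom G G"
begin

lemma funpow_hom: "phi ^^ n \<in> hom G G"
  by (induction n) (use hom_phi in \<open>auto simp: hom_def Pi_def\<close>)

lemma image_subset_carrier: "H \<subseteq> carrier G \<Longrightarrow> phi ` H \<subseteq> carrier G"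
  using hom_in_carrier[OF hom_phi] by blast

lemma subgroup_funpow_image: "subgroup H G \<Longrightarrow> subgroup ((phi ^^ n) ` H) G"
  using group_hom.subgroup_img_is_subgroup[of G G "phi ^^ n" H] funpow_hom
  by (simp add: group_hom_def group_hom_axioms_def)

lemma subgroup_image: "subgroup H G \<Longrightarrow> subgroup (phi ` H) G"
  using subgroup_funpow_image[of H 1] by simp

context
  fixes S assumes S: "subgroup S G"
begin

lemma subgroup_orbit_sum: "subgroup (orbit_sum G phi S n) G"
proof (induction n)
  case (Suc n)
  show ?case
    unfolding orbit_sum.simps by (rule mult_subgroups[OF Suc.IH subgroup_funpow_image[OF S]])
qed (simp add: S)

lemma orbit_sum_subset_carrier: "orbit_sum G phi S n \<subseteq> carrier G"
  using subgroup_orbit_sum subgroup.subset by blast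

lemma orbit_sum_subset_Suc: "orbit_sum G phi S n \<subseteq> orbit_sum G phi S (Suc n)"
  unfolding orbit_sum.simps
  by (rule subset_set_mult_right[OF orbit_sum_subset_carrier
        subgroup.one_closed[OF subgroup_funpow_image[OF S]]])

lemma orbit_sum_mono: "m \<le> n \<Longrightarrow> orbit_sum G phi S m \<subseteq> orbit_sum G phi S n"
  using lift_Suc_mono_le[of "orbit_sum G phi S", OF orbit_sum_subset_Suc] by blast

lemma orbit_sum_Suc_left: "orbit_sum G phi S (Suc n) = S <#> phi ` orbit_sum G phi S n"
proof (induction n)
  case 0
  show ?case by simp
next
  case (Suc n)
  let ?T = "orbit_sum G phi S" and ?P = "\<lambda>k. (phi ^^ k) ` S"
  have P_carrier: "?P k \<subseteq> carrier G" for k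
    using subgroup_funpow_image[OF S] subgroup.subset by blast
  have P_Suc: "?P (Suc k) = phi ` ?P k" for k
    by (simp only: funpow.simps(2) image_comp)
  have "?T (Suc (Suc n)) = (S <#> phi ` ?T n) <#> phi ` ?P (Suc n)"
    by (subst orbit_sum.simps(2)) (simp only: Suc.IH P_Suc[of "Suc n"])
  also have "\<dots> = S <#> (phi ` ?T n <#> phi ` ?P (Suc n))"
    by (rule set_mult_assoc[OF subgroup.subset[OF S]
          image_subset_carrier[OF orbit_sum_subset_carrier] image_subset_carrier[OF P_carrier]])
  also have "\<dots> = S <#> phi ` ?T (Suc n)"
    by (simp only: set_mult_hom[OF hom_phi orbit_sum_subset_carrier P_carrier] orbit_sum.simps(2))
  finally show ?case .
qed

lemma orbit_sum_stationary:
  assumes "orbit_sum G phi S (Suc n) = orbit_sum G phi S n"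
  shows "orbit_sum G phi S k \<subseteq> orbit_sum G phi S n"
proof (cases "k \<le> n")
  case True
  then show ?thesis by (rule orbit_sum_mono)
next
  case False
  then have "n \<le> k" by simp
  then have "orbit_sum G phi S k = orbit_sum G phi S n"
  proof (induction k rule: dec_induct)
    case (step k)
    have "orbit_sum G phi S (Suc k) = S <#> phi ` orbit_sum G phi S n"
      by (simp only: orbit_sum_Suc_left step.IH)
    also have "\<dots> = orbit_sum G phi S (Suc n)"
      by (simp only: orbit_sum_Suc_left)
    finally show ?case
      using assms by (rule trans)
  qed simp
  then show ?thesis by (rule equalityD1)
qed

lemma orbit_sum_Suc_eq_if_covered:
  assumes "finite S" "S \<subseteq> phi ` orbit_sum G phi S n"
  shows "orbit_sum G phi S (Suc n) = orbit_sum G phi S n"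
proof -
  let ?T = "orbit_sum G phi S"
  have "?T (Suc n) = phi ` ?T n"
    unfolding orbit_sum_Suc_left by (rule set_mult_subgroup_absorb[OF
          subgroup_image[OF subgroup_orbit_sum] assms(2) subgroup.one_closed[OF S]])
  then have "card (?T (Suc n)) \<le> card (?T n)"
    by (simp only: card_image_le[OF finite_orbit_sum[OF assms(1)]])
  then show ?thesis
    by (rule card_seteq[OF finite_orbit_sum[OF assms(1)] orbit_sum_subset_Suc, THEN sym])
qed

lemma surjective_expansive_orbit_sum_stationary:
  assumes "torsion_group G" "phi ` carrier G = carrier G" "finite S"
    and expansive: "\<And>F. subgroup F G \<Longrightarrow> finite F \<Longrightarrow> \<exists>n. F \<subseteq> orbit_sum G phi S n"
  obtains n where "orbit_sum G phi S (Suc n) = orbit_sum G phi S n"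
proof -
  have "S \<subseteq> phi ` carrier G"
    using subgroup.subset[OF S] assms(2) by simp
  then obtain A where A: "A \<subseteq> carrier G" "finite A" "S = phi ` A"
    using finite_subset_image[OF assms(3)] by blast
  obtain F where F: "subgroup F G" "finite F" "A \<subseteq> F"
    using torsion_finite_subgroup_containing[OF assms(1) A(2,1)] .
  obtain n where "F \<subseteq> orbit_sum G phi S n"
    using expansive[OF F(1,2)] by blast
  then have "S \<subseteq> phi ` orbit_sum G phi S n"
    using A(3) F(3) by blast
  then show thesis
    using that orbit_sum_Suc_eq_if_covered[OF assms(3)] by blast
qed

end

end

theorem theorem4p2:
  fixes G (structure) and phi :: "'a \<Rightarrow> 'a"
  assumes "comm_group G"
    and "torsion_group G"
    and "phi \<in> hom G G"
    and "phi ` carrier G = carrier G"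
    and "positively_expansive G phi"
  shows "finite (carrier G)"
proof -
  interpret comm_group_endomorphism G phi
    using assms(1,3) by (simp add: comm_group_endomorphism_def comm_group_endomorphism_axioms_def)
  obtain S where S: "subgroup S G" "finite S"
    and expansive: "\<And>F. subgroup F G \<Longrightarrow> finite F \<Longrightarrow> \<exists>n. F \<subseteq> orbit_sum G phi S n"
    using assms(5) unfolding positively_expansive_def by blast
  obtain n where stationary: "orbit_sum G phi S (Suc n) = orbit_sum G phi S n"
    using surjective_expansive_orbit_sum_stationary[OF S(1) assms(2,4) S(2) expansive] .
  have "carrier G \<subseteq> orbit_sum G phi S n"
  proof
    fix x assume x: "x \<in> carrier G"
    have "subgroup (generate G {x}) G"
      using generate_is_subgroup x by simp
    then obtain k where "generate G {x} \<subseteq> orbit_sum G phi S k"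
      using expansive torsion_finite_generate_singleton[OF assms(2) x] by blast
    then show "x \<in> orbit_sum G phi S n"
      using generate.incl[of x "{x}"] orbit_sum_stationary[OF S(1) stationary, of k] by blast
  qed
  then show ?thesis
    using finite_orbit_sum[OF S(2)] finite_subset by blast
qed

end
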